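(* The Hilbert spaces $H_N^{\mathrm{sip}}=L^2(\frac1N\mathbb Z,\nu_{\gamma,N})$ converge to $H^{\mathrm{sbm}}=L^2(\mathbb R,\bar\nu)$ in the following sense: with the dense subset $C=\{f+\lambda\mathbf 1_{\{0\}}:f\in C_c^\infty(\mathbb R),\lambda\in\mathbb R\}\subset H^{\mathrm{sbm}}$ and the linear maps $\Phi_N:C\to H_N^{\mathrm{sip}}$, $\Phi_Nf=f|_{\frac1N\mathbb Z}$, one has $\lim_{N\to\infty}\|\Phi_Nf\|_{H_N^{\mathrm{sip}}}=\|f\|_{H^{\mathrm{sbm}}}$ for all $f\in C$.
   Context: $\gamma>0$; $\mu_N$ gives mass $\frac1N$ to each point of $\frac1N\mathbb Z$; $\nu_{\gamma,N}=\mu_N+\sqrt2\gamma\delta_0$; $\bar\nu=dx+\sqrt2\gamma\delta_0$ on $\mathbb R$. *)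

theory Defs
  imports "HOL-Analysis.Analysis"
begin

definition smooth_real :: "(real \<Rightarrow> real) \<Rightarrow> bool" where
  "smooth_real g \<longleftrightarrow> (\<forall>n x. ((deriv ^^ n) g) differentiable (at x))"

definition Cc_infty :: "(real \<Rightarrow> real) set" where
  "Cc_infty = {g. smooth_real g \<and> compact (closure {x. g x \<noteq> 0})}"

definition C_sbm :: "(real \<Rightarrow> real) set" where
  "C_sbm = {h. \<exists>g\<in>Cc_infty. \<exists>c::real. h = (\<lambda>x. g x + (if x = 0 then c else 0))}"

text \<open>Squared norm in H^sbm = L^2(R, dx + sqrt 2 gamma delta_0).\<close>
definition normsq_sbm :: "real \<Rightarrow> (real \<Rightarrow> real) \<Rightarrow> real" where
  "normsq_sbm \<gamma> f = (\<integral>x. (f x)^2 \<partial>lborel) + sqrt 2 * \<gamma> * (f 0)^2"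

text \<open>Squared norm in H_N^sip = L^2(Z/N, mu_N + sqrt 2 gamma delta_0),
  applied to the restriction of f to the lattice (1/N)Z.\<close>
definition normsq_sip :: "real \<Rightarrow> nat \<Rightarrow> (real \<Rightarrow> real) \<Rightarrow> real" where
  "normsq_sip \<gamma> N f = (\<Sum>\<^sub>\<infinity>k::int. (1 / real N) * (f (real_of_int k / real N))^2)
                        + sqrt 2 * \<gamma> * (f 0)^2"

end

theory Submission
  imports Defs "HOL-Computational_Algebra.Polynomial"
begin

(* Density: the products exp(-1/(s(x-a))) exp(-1/(s(b-x))) are smooth bumps supported in
   [a, b] that tend to the indicator of [a, b] as s -> oo, hence also in L^2 by dominated
   convergence. A Dynkin-system argument extends the approximation to Borel sets of finite
   measure, linearity to simple functions, and dominated convergence once more to every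
   square-integrable function. The atom sqrt 2 gamma delta_0 costs nothing, because an element
   of C may take an arbitrary value at 0.

   Convergence of norms: for f in C the lattice part of the discrete norm is the Riemann sum
   sum_k f(k/N)^2 / N, which is the Lebesgue integral of the step function
   x -> f(floor(N x)/N)^2. As f^2 is bounded, compactly supported and continuous off the null
   set {0}, these step functions converge to f^2 almost everywhere under a common integrable
   bound; the atom terms agree on both sides. *)

lemma real_differentiable_iff_field_differentiable:
  "(f :: real \<Rightarrow> real) differentiable (at x) \<longleftrightarrow> f field_differentiable (at x)"
  by (simp add: field_differentiable_def real_differentiable_def)

definition differentiable_upto :: "nat \<Rightarrow> (real \<Rightarrow> real) \<Rightarrow> bool" where
  "differentiable_upto n f \<longleftrightarrow> (\<forall>k\<le>n. \<forall>x. (deriv ^^ k) f field_differentiable (at x))"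

lemma smooth_real_iff_differentiable_upto: "smooth_real f \<longleftrightarrow> (\<forall>n. differentiable_upto n f)"
  unfolding smooth_real_def differentiable_upto_def real_differentiable_iff_field_differentiable
  by auto

lemma differentiable_upto_0: "differentiable_upto 0 f \<longleftrightarrow> (\<forall>x. f field_differentiable (at x))"
  unfolding differentiable_upto_def by auto

lemma differentiable_upto_Suc:
  "differentiable_upto (Suc n) f \<longleftrightarrow>
     (\<forall>x. f field_differentiable (at x)) \<and> differentiable_upto n (deriv f)"
  unfolding differentiable_upto_def less_Suc_eq_le[symmetric] All_less_Suc2
  by (simp add: funpow_Suc_right del: funpow.simps)

lemma smooth_real_imp_field_differentiable: "smooth_real f \<Longrightarrow> f field_differentiable (at x)"
  unfolding smooth_real_def real_differentiable_iff_field_differentiable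
  by (metis funpow_0)

lemma smooth_real_deriv: "smooth_real f \<Longrightarrow> smooth_real (deriv f)"
  unfolding smooth_real_def by (metis funpow_Suc_right comp_apply)

lemma differentiable_upto_add:
  "differentiable_upto n f \<Longrightarrow> differentiable_upto n g \<Longrightarrow> differentiable_upto n (\<lambda>x. f x + g x)"
proof (induction n arbitrary: f g)
  case 0
  then show ?case by (simp add: differentiable_upto_0 field_differentiable_add)
next
  case (Suc n)
  then have "deriv (\<lambda>x. f x + g x) = (\<lambda>x. deriv f x + deriv g x)"
    by (intro ext deriv_add) (auto simp: differentiable_upto_Suc)
  with Suc show ?case by (simp add: differentiable_upto_Suc field_differentiable_add)
qed

lemma differentiable_upto_cmult:
  "differentiable_upto n f \<Longrightarrow> differentiable_upto n (\<lambda>x. c * f x)"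
proof (induction n arbitrary: f)
  case 0
  then show ?case by (simp add: differentiable_upto_0 field_differentiable_mult)
next
  case (Suc n)
  then have "deriv (\<lambda>x. c * f x) = (\<lambda>x. c * deriv f x)"
    by (intro ext deriv_cmult) (auto simp: differentiable_upto_Suc)
  with Suc show ?case by (simp add: differentiable_upto_Suc field_differentiable_mult)
qed

lemma field_differentiable_compose_affine:
  fixes f :: "real \<Rightarrow> real"
  assumes "f field_differentiable (at (c * x + d))"
  shows "(\<lambda>x. f (c * x + d)) field_differentiable (at x)"
proof -
  have "(\<lambda>x. c * x + d) field_differentiable (at x)"
    by (intro field_differentiable_add field_differentiable_mult field_differentiable_const
        field_differentiable_ident)
  with assms show ?thesis
    using field_differentiable_compose[of "\<lambda>x. c * x + d" x f] by (simp add: o_def)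
qed

lemma differentiable_upto_compose_affine:
  "differentiable_upto n f \<Longrightarrow> differentiable_upto n (\<lambda>x. f (c * x + d))"
proof (induction n arbitrary: f)
  case 0
  then show ?case by (simp add: differentiable_upto_0 field_differentiable_compose_affine)
next
  case (Suc n)
  then have "deriv (\<lambda>x. f (c * x + d)) = (\<lambda>x. c * deriv f (c * x + d))"
    by (intro ext deriv_compose_linear') (auto simp: differentiable_upto_Suc)
  with Suc show ?case
    by (simp add: differentiable_upto_Suc field_differentiable_compose_affine differentiable_upto_cmult)
qed

lemma differentiable_upto_mult:
  "smooth_real f \<Longrightarrow> smooth_real g \<Longrightarrow> differentiable_upto n (\<lambda>x. f x * g x)"
proof (induction n arbitrary: f g)
  case 0
  then show ?case
    by (simp add: differentiable_upto_0 field_differentiable_mult smooth_real_imp_field_differentiable)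
next
  case (Suc n)
  then have "deriv (\<lambda>x. f x * g x) = (\<lambda>x. f x * deriv g x + deriv f x * g x)"
    by (intro ext deriv_mult smooth_real_imp_field_differentiable)
  moreover have "differentiable_upto n (\<lambda>x. f x * deriv g x + deriv f x * g x)"
    using Suc by (intro differentiable_upto_add Suc.IH smooth_real_deriv)
  ultimately show ?case
    using Suc by (simp add: differentiable_upto_Suc field_differentiable_mult
        smooth_real_imp_field_differentiable)
qed

lemma smooth_real_const: "smooth_real (\<lambda>x. c)"
proof -
  have "differentiable_upto n (\<lambda>x. c)" for n c
    by (induction n arbitrary: c) (simp_all add: differentiable_upto_0 differentiable_upto_Suc)
  then show ?thesis by (simp add: smooth_real_iff_differentiable_upto)
qed

lemma smooth_real_add: "smooth_real f \<Longrightarrow> smooth_real g \<Longrightarrow> smooth_real (\<lambda>x. f x + g x)"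
  by (simp add: smooth_real_iff_differentiable_upto differentiable_upto_add)

lemma smooth_real_cmult: "smooth_real f \<Longrightarrow> smooth_real (\<lambda>x. c * f x)"
  by (simp add: smooth_real_iff_differentiable_upto differentiable_upto_cmult)

lemma smooth_real_mult: "smooth_real f \<Longrightarrow> smooth_real g \<Longrightarrow> smooth_real (\<lambda>x. f x * g x)"
  by (simp add: smooth_real_iff_differentiable_upto differentiable_upto_mult)

lemma smooth_real_compose_affine: "smooth_real f \<Longrightarrow> smooth_real (\<lambda>x. f (c * x + d))"
  by (simp add: smooth_real_iff_differentiable_upto differentiable_upto_compose_affine)

lemma smooth_real_continuous: "smooth_real f \<Longrightarrow> continuous_on UNIV f"
  by (simp add: continuous_at_imp_continuous_on field_differentiable_imp_continuous_at
      smooth_real_imp_field_differentiable)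

section \<open>A smooth bump function\<close>

text \<open>The polynomial factor makes this family of flat functions closed under differentiation.\<close>
definition poly_exp_recip :: "real poly \<Rightarrow> real \<Rightarrow> real" where
  "poly_exp_recip p x = (if x > 0 then poly p (1 / x) * exp (- (1 / x)) else 0)"

lemma tendsto_poly_times_exp_neg_at_top: "((\<lambda>t. poly p t * exp (- t) :: real) \<longlongrightarrow> 0) at_top"
proof -
  have "(\<lambda>t. poly p t * exp (- t)) = (\<lambda>t. \<Sum>i\<le>degree p. coeff p i * (t ^ i / exp t))"
    by (auto simp: poly_altdef sum_divide_distrib exp_minus field_simps)
  moreover have "((\<lambda>t. \<Sum>i\<le>degree p. coeff p i * (t ^ i / exp t)) \<longlongrightarrow> 0) at_top"
    by (intro tendsto_null_sum tendsto_mult_right_zero tendsto_power_div_exp_0)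
  ultimately show ?thesis by simp
qed

lemma tendsto_poly_exp_recip_at_right_0:
  "((\<lambda>y. poly p (1 / y) * exp (- (1 / y)) :: real) \<longlongrightarrow> 0) (at_right 0)"
  using filterlim_compose[OF tendsto_poly_times_exp_neg_at_top filterlim_inverse_at_top_right]
  by (simp add: o_def inverse_eq_divide)

text \<open>Writing \<open>t = 1/x\<close>, the \<open>x\<close>-derivative of \<open>P(t) e\<^sup>-\<^sup>t\<close> is \<open>t\<^sup>2 (P(t) - P'(t)) e\<^sup>-\<^sup>t\<close>;
  at \<open>0\<close> both one-sided difference quotients tend to \<open>0\<close>.\<close>
lemma has_real_derivative_poly_exp_recip:
  "(poly_exp_recip p has_real_derivative poly_exp_recip ([:0, 0, 1:] * (p - pderiv p)) x) (at x)"
proof -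
  consider "x > 0" | "x < 0" | "x = 0" by linarith
  then show ?thesis
  proof cases
    case 1
    have "((\<lambda>y. poly p (1 / y) * exp (- (1 / y))) has_real_derivative
            poly_exp_recip ([:0, 0, 1:] * (p - pderiv p)) x) (at x)"
      using 1
      by (auto intro!: derivative_eq_intros DERIV_chain2[OF poly_DERIV]
          simp: poly_exp_recip_def power2_eq_square field_simps)
    then show ?thesis
      by (rule has_field_derivative_transform_within_open[where S = "{0<..}"])
        (use 1 in \<open>auto simp: poly_exp_recip_def\<close>)
  next
    case 2
    have "((\<lambda>y. 0) has_real_derivative poly_exp_recip ([:0, 0, 1:] * (p - pderiv p)) x) (at x)"
      using 2 by (simp add: poly_exp_recip_def)
    then show ?thesis
      by (rule has_field_derivative_transform_within_open[where S = "{..<0}"])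
        (use 2 in \<open>auto simp: poly_exp_recip_def\<close>)
  next
    case 3
    let ?quot = "\<lambda>y. (poly_exp_recip p y - poly_exp_recip p 0) / (y - 0)"
    have "(?quot \<longlongrightarrow> 0) (at_left 0)"
      by (rule Lim_transform_eventually[OF tendsto_const])
        (auto simp: poly_exp_recip_def eventually_at_left_field intro!: exI[of _ "-1"])
    moreover have "(?quot \<longlongrightarrow> 0) (at_right 0)"
      by (rule Lim_transform_eventually[OF tendsto_poly_exp_recip_at_right_0[of "[:0, 1:] * p"]])
        (auto simp: poly_exp_recip_def eventually_at_right_field intro!: exI[of _ 1])
    ultimately have "(?quot \<longlongrightarrow> 0) (at 0)"
      by (simp add: filterlim_at_split)
    then show ?thesis
      using 3 by (simp add: has_field_derivative_iff poly_exp_recip_def)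
  qed
qed

lemma smooth_real_poly_exp_recip: "smooth_real (poly_exp_recip p)"
proof -
  have "differentiable_upto n (poly_exp_recip p)" for n
  proof (induction n arbitrary: p)
    case 0
    then show ?case
      using has_real_derivative_poly_exp_recip
      by (auto simp: differentiable_upto_0 field_differentiable_def)
  next
    case (Suc n)
    have "deriv (poly_exp_recip p) = poly_exp_recip ([:0, 0, 1:] * (p - pderiv p))"
      by (intro ext DERIV_imp_deriv has_real_derivative_poly_exp_recip)
    with Suc show ?case
      using has_real_derivative_poly_exp_recip
      by (auto simp: differentiable_upto_Suc field_differentiable_def)
  qed
  then show ?thesis by (simp add: smooth_real_iff_differentiable_upto)
qed

definition bump :: "real \<Rightarrow> real \<Rightarrow> real \<Rightarrow> real \<Rightarrow> real" where
  "bump a b s x = poly_exp_recip 1 (s * (x - a)) * poly_exp_recip 1 (s * (b - x))"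

lemma smooth_real_bump: "smooth_real (bump a b s)"
proof -
  have "smooth_real (\<lambda>x. poly_exp_recip 1 (s * x + - s * a) * poly_exp_recip 1 (- s * x + s * b))"
    by (intro smooth_real_mult smooth_real_compose_affine smooth_real_poly_exp_recip)
  moreover have "bump a b s = (\<lambda>x. poly_exp_recip 1 (s * x + - s * a) * poly_exp_recip 1 (- s * x + s * b))"
    by (simp add: fun_eq_iff bump_def right_diff_distrib)
  ultimately show ?thesis by simp
qed

lemma bump_eq_0: "s > 0 \<Longrightarrow> x \<notin> {a<..<b} \<Longrightarrow> bump a b s x = 0"
  by (auto simp: bump_def poly_exp_recip_def zero_less_mult_iff)

lemma bump_bounds: "0 \<le> bump a b s x" "bump a b s x \<le> 1"
  unfolding bump_def poly_exp_recip_def by (auto intro!: mult_le_one)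

lemma bump_indicator_square_le:
  assumes "s > 0"
  shows "(indicator {a..b} x - bump a b s x)\<^sup>2 \<le> indicator {a..b} x"
proof (cases "x \<in> {a..b}")
  case True
  have "(1 - bump a b s x)\<^sup>2 \<le> 1"
    using bump_bounds[of a b s x] by (simp add: abs_square_le_1)
  with True show ?thesis by simp
next
  case False
  with bump_eq_0[OF assms, of x a b] show ?thesis by auto
qed

lemma tendsto_bump_at_top:
  assumes "x \<noteq> a" "x \<noteq> b"
  shows "((\<lambda>s. bump a b s x) \<longlongrightarrow> indicator {a..b} x) at_top"
proof (cases "x \<in> {a<..<b}")
  case True
  have "((\<lambda>s. exp (- (inverse s / (x - a))) * exp (- (inverse s / (b - x)))) \<longlongrightarrow>
          exp (- (0 / (x - a))) * exp (- (0 / (b - x)))) at_top"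
    by (intro tendsto_intros tendsto_inverse_0_at_top filterlim_ident) (use True in auto)
  moreover have "\<forall>\<^sub>F s in at_top. exp (- (inverse s / (x - a))) * exp (- (inverse s / (b - x)))
                                   = bump a b s x"
    using eventually_gt_at_top[of 0]
    by eventually_elim (use True in \<open>simp add: bump_def poly_exp_recip_def field_simps\<close>)
  ultimately show ?thesis
    using True by (simp add: tendsto_cong)
next
  case False
  with assms have "x \<notin> {a..b}" by auto
  moreover have "\<forall>\<^sub>F s in at_top. bump a b s x = 0"
    using eventually_gt_at_top[of 0] by eventually_elim (use False in \<open>simp add: bump_eq_0\<close>)
  ultimately show ?thesis
    by (simp add: tendsto_eventually)
qed

lemma Cc_infty_iff: "g \<in> Cc_infty \<longleftrightarrow> smooth_real g \<and> bounded {x. g x \<noteq> 0}"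
  unfolding Cc_infty_def by simp

lemma zero_in_Cc_infty: "(\<lambda>x. 0) \<in> Cc_infty"
  by (simp add: Cc_infty_iff smooth_real_const)

lemma Cc_infty_add: "f \<in> Cc_infty \<Longrightarrow> g \<in> Cc_infty \<Longrightarrow> (\<lambda>x. f x + g x) \<in> Cc_infty"
  unfolding Cc_infty_iff
  by (auto simp: smooth_real_add intro: bounded_subset[of "{x. f x \<noteq> 0} \<union> {x. g x \<noteq> 0}"])

lemma Cc_infty_cmult: "f \<in> Cc_infty \<Longrightarrow> (\<lambda>x. c * f x) \<in> Cc_infty"
  unfolding Cc_infty_iff by (auto simp: smooth_real_cmult intro: bounded_subset)

lemma bump_in_Cc_infty:
  assumes "s > 0"
  shows "bump a b s \<in> Cc_infty"
proof -
  have "{x. bump a b s x \<noteq> 0} \<subseteq> {a<..<b}"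
    using bump_eq_0[OF assms] by blast
  moreover have "bounded {a<..<b}"
    by (metis bounded_box box_real(1))
  ultimately show ?thesis
    unfolding Cc_infty_iff by (metis smooth_real_bump bounded_subset)
qed

lemma Cc_infty_continuous: "g \<in> Cc_infty \<Longrightarrow> continuous_on UNIV g"
  by (simp add: Cc_infty_iff smooth_real_continuous)

lemma Cc_infty_borel_measurable: "g \<in> Cc_infty \<Longrightarrow> g \<in> borel_measurable borel"
  by (simp add: Cc_infty_continuous borel_measurable_continuous_onI)

lemma Cc_infty_bounded_support:
  assumes "g \<in> Cc_infty"
  obtains R where "\<And>y. R < \<bar>y\<bar> \<Longrightarrow> g y = 0"
proof -
  from assms obtain R where R: "\<And>y. g y \<noteq> 0 \<Longrightarrow> \<bar>y\<bar> \<le> R"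
    unfolding Cc_infty_iff bounded_iff by auto
  show ?thesis
  proof (rule that)
    show "g y = 0" if "R < \<bar>y\<bar>" for y
      using R[of y] that by fastforce
  qed
qed

lemma Cc_infty_bounded:
  assumes "g \<in> Cc_infty"
  obtains B where "\<And>y. \<bar>g y\<bar> \<le> B"
proof -
  obtain R where R: "\<And>y. R < \<bar>y\<bar> \<Longrightarrow> g y = 0"
    using Cc_infty_bounded_support[OF assms] by blast
  have "compact (g ` {-R..R})"
    using Cc_infty_continuous[OF assms] by (intro compact_continuous_image) (auto intro: continuous_on_subset)
  then obtain B where B: "\<And>y. y \<in> {-R..R} \<Longrightarrow> \<bar>g y\<bar> \<le> B"
    by (metis compact_imp_bounded bounded_iff image_eqI real_norm_def)
  have "\<bar>g y\<bar> \<le> max B 0" for y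
    using R[of y] B[of y] by (cases "\<bar>y\<bar> \<le> R") (auto simp: abs_le_iff)
  then show ?thesis using that by blast
qed

section \<open>Density of \<open>C\<^sub>c\<^sup>\<infinity>\<close> in \<open>L\<^sup>2\<close>\<close>

definition L2_sqdist :: "(real \<Rightarrow> real) \<Rightarrow> (real \<Rightarrow> real) \<Rightarrow> ennreal" where
  "L2_sqdist f g = (\<integral>\<^sup>+x. ennreal ((f x - g x)\<^sup>2) \<partial>lborel)"

lemma nn_integral_square_add_le:
  fixes u v :: "'a \<Rightarrow> real"
  assumes [measurable]: "u \<in> borel_measurable M" "v \<in> borel_measurable M"
  shows "(\<integral>\<^sup>+x. ennreal ((u x + v x)\<^sup>2) \<partial>M)
           \<le> 2 * (\<integral>\<^sup>+x. ennreal ((u x)\<^sup>2) \<partial>M) + 2 * (\<integral>\<^sup>+x. ennreal ((v x)\<^sup>2) \<partial>M)"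
proof -
  have "ennreal ((u x + v x)\<^sup>2) \<le> 2 * ennreal ((u x)\<^sup>2) + 2 * ennreal ((v x)\<^sup>2)" for x
  proof -
    have "(u x + v x)\<^sup>2 \<le> 2 * (u x)\<^sup>2 + 2 * (v x)\<^sup>2"
      using zero_le_power2[of "u x - v x"] unfolding power2_sum power2_diff by linarith
    then have "ennreal ((u x + v x)\<^sup>2) \<le> ennreal (2 * (u x)\<^sup>2 + 2 * (v x)\<^sup>2)"
      by (rule ennreal_leI)
    then show ?thesis
      by (simp add: ennreal_mult)
  qed
  then have "(\<integral>\<^sup>+x. ennreal ((u x + v x)\<^sup>2) \<partial>M)
               \<le> (\<integral>\<^sup>+x. 2 * ennreal ((u x)\<^sup>2) + 2 * ennreal ((v x)\<^sup>2) \<partial>M)"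
    by (intro nn_integral_mono)
  also have "\<dots> = 2 * (\<integral>\<^sup>+x. ennreal ((u x)\<^sup>2) \<partial>M) + 2 * (\<integral>\<^sup>+x. ennreal ((v x)\<^sup>2) \<partial>M)"
    by (simp add: nn_integral_add nn_integral_cmult)
  finally show ?thesis .
qed

lemma L2_sqdist_triangle:
  assumes "f \<in> borel_measurable borel" "g \<in> borel_measurable borel" "h \<in> borel_measurable borel"
  shows "L2_sqdist f h \<le> 2 * L2_sqdist f g + 2 * L2_sqdist g h"
  using nn_integral_square_add_le[of "\<lambda>x. f x - g x" lborel "\<lambda>x. g x - h x"] assms
  by (simp add: L2_sqdist_def)

lemma L2_sqdist_add:
  assumes "f \<in> borel_measurable borel" "f' \<in> borel_measurable borel"
    and "g \<in> borel_measurable borel" "g' \<in> borel_measurable borel"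
  shows "L2_sqdist (\<lambda>x. f x + g x) (\<lambda>x. f' x + g' x) \<le> 2 * L2_sqdist f f' + 2 * L2_sqdist g g'"
  using nn_integral_square_add_le[of "\<lambda>x. f x - f' x" lborel "\<lambda>x. g x - g' x"] assms
  by (simp add: L2_sqdist_def algebra_simps)

lemma L2_sqdist_cmult:
  assumes "f \<in> borel_measurable borel" "g \<in> borel_measurable borel"
  shows "L2_sqdist (\<lambda>x. c * f x) (\<lambda>x. c * g x) = ennreal (c\<^sup>2) * L2_sqdist f g"
proof -
  have "ennreal ((c * f x - c * g x)\<^sup>2) = ennreal (c\<^sup>2) * ennreal ((f x - g x)\<^sup>2)" for x
    by (simp add: ennreal_mult[symmetric] power_mult_distrib right_diff_distrib[symmetric])
  then show ?thesis
    using assms by (simp add: L2_sqdist_def nn_integral_cmult)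
qed

lemma L2_sqdist_indicator_subset:
  assumes "A \<in> sets borel" "B \<in> sets borel" "B \<subseteq> A"
  shows "L2_sqdist (indicator A) (indicator B) = emeasure lborel (A - B)"
proof -
  have "ennreal ((indicator A x - indicator B x)\<^sup>2) = indicator (A - B) x" for x
    using assms(3) by (auto simp: indicator_def)
  then show ?thesis
    using assms by (simp add: L2_sqdist_def)
qed

lemma tendsto_L2_sqdist_indicator_incseq:
  assumes [measurable]: "\<And>k. B k \<in> sets borel" and "incseq B" "(\<Union>k. B k) = A"
    and "emeasure lborel A < \<infinity>"
  shows "(\<lambda>k. L2_sqdist (indicator A) (indicator (B k))) \<longlonglongrightarrow> 0"
proof -
  have A[measurable]: "A \<in> sets borel"
    using assms(3) by (auto intro: sets.countable_UN'')
  have "(\<lambda>k. emeasure lborel (A - B k)) \<longlonglongrightarrow> emeasure lborel (\<Inter>k. A - B k)"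
  proof (rule Lim_emeasure_decseq)
    show "decseq (\<lambda>k. A - B k)"
      using \<open>incseq B\<close> by (auto simp: incseq_def decseq_def)
    show "emeasure lborel (A - B k) \<noteq> \<infinity>" for k
      using emeasure_mono[of "A - B k" A lborel] assms(4) by auto
  qed auto
  moreover have "L2_sqdist (indicator A) (indicator (B k)) = emeasure lborel (A - B k)" for k
    using assms(3) by (intro L2_sqdist_indicator_subset) auto
  ultimately show ?thesis
    using assms(3) by simp
qed

definition L2_approx_by_Cc :: "(real \<Rightarrow> real) \<Rightarrow> bool" where
  "L2_approx_by_Cc f \<longleftrightarrow> f \<in> borel_measurable borel \<and>
     (\<exists>g. (\<forall>k. g k \<in> Cc_infty) \<and> (\<lambda>k. L2_sqdist f (g k)) \<longlonglongrightarrow> 0)"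

lemma L2_approx_by_Cc_borel_measurable: "L2_approx_by_Cc f \<Longrightarrow> f \<in> borel_measurable borel"
  by (simp add: L2_approx_by_Cc_def)

lemma L2_approx_by_CcI:
  assumes "f \<in> borel_measurable borel" "\<And>k. g k \<in> Cc_infty"
    and "\<And>k. L2_sqdist f (g k) \<le> e k" "e \<longlonglongrightarrow> 0"
  shows "L2_approx_by_Cc f"
proof -
  have "(\<lambda>k. L2_sqdist f (g k)) \<longlonglongrightarrow> 0"
    by (rule tendsto_sandwich[OF _ _ tendsto_const assms(4)]) (use assms(3) in auto)
  with assms(1,2) show ?thesis
    unfolding L2_approx_by_Cc_def by blast
qed

lemma L2_approx_by_Cc_if_Cc: "g \<in> Cc_infty \<Longrightarrow> L2_approx_by_Cc g"
  by (rule L2_approx_by_CcI[where g = "\<lambda>_. g" and e = "\<lambda>_. 0"])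
    (simp_all add: Cc_infty_borel_measurable L2_sqdist_def)

lemma L2_approx_by_Cc_add:
  assumes "L2_approx_by_Cc f" "L2_approx_by_Cc g"
  shows "L2_approx_by_Cc (\<lambda>x. f x + g x)"
proof -
  obtain u where u: "\<And>k. u k \<in> Cc_infty" "(\<lambda>k. L2_sqdist f (u k)) \<longlonglongrightarrow> 0"
    using assms(1) unfolding L2_approx_by_Cc_def by blast
  obtain v where v: "\<And>k. v k \<in> Cc_infty" "(\<lambda>k. L2_sqdist g (v k)) \<longlonglongrightarrow> 0"
    using assms(2) unfolding L2_approx_by_Cc_def by blast
  have [measurable]: "f \<in> borel_measurable borel" "g \<in> borel_measurable borel"
    using assms by (simp_all add: L2_approx_by_Cc_borel_measurable)
  show ?thesis
  proof (rule L2_approx_by_CcI)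
    show "(\<lambda>x. u k x + v k x) \<in> Cc_infty" for k
      using u(1) v(1) by (rule Cc_infty_add)
    show "L2_sqdist (\<lambda>x. f x + g x) (\<lambda>x. u k x + v k x)
            \<le> 2 * L2_sqdist f (u k) + 2 * L2_sqdist g (v k)" for k
      using u(1) v(1) by (intro L2_sqdist_add) (simp_all add: Cc_infty_borel_measurable)
    show "(\<lambda>k. 2 * L2_sqdist f (u k) + 2 * L2_sqdist g (v k)) \<longlonglongrightarrow> 0"
      using tendsto_add[OF ennreal_tendsto_cmult[OF _ u(2)] ennreal_tendsto_cmult[OF _ v(2)], of 2 2]
      by simp
  qed simp
qed

lemma L2_approx_by_Cc_cmult:
  assumes "L2_approx_by_Cc f"
  shows "L2_approx_by_Cc (\<lambda>x. c * f x)"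
proof -
  obtain u where u: "\<And>k. u k \<in> Cc_infty" "(\<lambda>k. L2_sqdist f (u k)) \<longlonglongrightarrow> 0"
    using assms unfolding L2_approx_by_Cc_def by blast
  have [measurable]: "f \<in> borel_measurable borel"
    using assms by (rule L2_approx_by_Cc_borel_measurable)
  show ?thesis
  proof (rule L2_approx_by_CcI)
    show "(\<lambda>x. c * u k x) \<in> Cc_infty" for k
      using u(1) by (rule Cc_infty_cmult)
    show "L2_sqdist (\<lambda>x. c * f x) (\<lambda>x. c * u k x) \<le> ennreal (c\<^sup>2) * L2_sqdist f (u k)" for k
      using u(1) by (simp add: L2_sqdist_cmult Cc_infty_borel_measurable)
    show "(\<lambda>k. ennreal (c\<^sup>2) * L2_sqdist f (u k)) \<longlonglongrightarrow> 0"
      using ennreal_tendsto_cmult[OF _ u(2), of "ennreal (c\<^sup>2)"] by simp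
  qed simp
qed

lemma L2_approx_by_Cc_diff:
  "L2_approx_by_Cc f \<Longrightarrow> L2_approx_by_Cc g \<Longrightarrow> L2_approx_by_Cc (\<lambda>x. f x - g x)"
  using L2_approx_by_Cc_add[of f "\<lambda>x. (- 1) * g x"] L2_approx_by_Cc_cmult[of g "- 1"] by simp

lemma L2_approx_by_Cc_sum:
  "finite I \<Longrightarrow> (\<And>i. i \<in> I \<Longrightarrow> L2_approx_by_Cc (f i)) \<Longrightarrow> L2_approx_by_Cc (\<lambda>x. \<Sum>i\<in>I. f i x)"
proof (induction I rule: finite_induct)
  case empty
  then show ?case by (simp add: L2_approx_by_Cc_if_Cc zero_in_Cc_infty)
next
  case (insert i I)
  then show ?case by (simp add: L2_approx_by_Cc_add)
qed

lemma L2_approx_by_Cc_limit: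
  assumes [measurable]: "f \<in> borel_measurable borel"
    and approx: "\<And>k. L2_approx_by_Cc (s k)" and lim: "(\<lambda>k. L2_sqdist f (s k)) \<longlonglongrightarrow> 0"
  shows "L2_approx_by_Cc f"
proof -
  have "\<exists>g\<in>Cc_infty. L2_sqdist (s k) g < ennreal (inverse (Suc k))" for k
  proof -
    obtain u where u: "\<And>i. u i \<in> Cc_infty" "(\<lambda>i. L2_sqdist (s k) (u i)) \<longlonglongrightarrow> 0"
      using approx unfolding L2_approx_by_Cc_def by blast
    have "\<forall>\<^sub>F i in sequentially. L2_sqdist (s k) (u i) < ennreal (inverse (Suc k))"
      using u(2) by (rule order_tendstoD) simp
    then obtain i where "L2_sqdist (s k) (u i) < ennreal (inverse (Suc k))"
      using eventually_happens'[OF sequentially_bot] by blast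
    then show ?thesis
      using u(1) by blast
  qed
  then obtain g where g: "\<And>k. g k \<in> Cc_infty" "\<And>k. L2_sqdist (s k) (g k) < ennreal (inverse (Suc k))"
    by metis
  show ?thesis
  proof (rule L2_approx_by_CcI[OF assms(1) g(1)])
    show "L2_sqdist f (g k) \<le> 2 * L2_sqdist f (s k) + 2 * ennreal (inverse (Suc k))" for k
    proof -
      have "L2_sqdist f (g k) \<le> 2 * L2_sqdist f (s k) + 2 * L2_sqdist (s k) (g k)"
        using approx[of k] g(1)[of k]
        by (intro L2_sqdist_triangle) (simp_all add: L2_approx_by_Cc_borel_measurable Cc_infty_borel_measurable)
      also have "\<dots> \<le> 2 * L2_sqdist f (s k) + 2 * ennreal (inverse (Suc k))"
        using g(2)[of k] by (intro add_left_mono mult_left_mono) simp_all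
      finally show ?thesis .
    qed
    have "(\<lambda>k. ennreal (inverse (Suc k))) \<longlonglongrightarrow> ennreal 0"
      by (intro tendsto_ennrealI LIMSEQ_inverse_real_of_nat)
    from tendsto_add[OF ennreal_tendsto_cmult[OF _ lim] ennreal_tendsto_cmult[OF _ this], of 2 2]
    show "(\<lambda>k. 2 * L2_sqdist f (s k) + 2 * ennreal (inverse (Suc k))) \<longlonglongrightarrow> 0"
      by simp
  qed
qed

lemma L2_approx_by_Cc_indicator_Icc: "L2_approx_by_Cc (indicator {a..b})"
proof (rule L2_approx_by_CcI[where g = "\<lambda>k. bump a b (real (Suc k))"
      and e = "\<lambda>k. L2_sqdist (indicator {a..b}) (bump a b (real (Suc k)))"])
  have [measurable]: "bump a b s \<in> borel_measurable borel" for s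
    by (intro borel_measurable_continuous_onI smooth_real_continuous smooth_real_bump)
  show "bump a b (real (Suc k)) \<in> Cc_infty" for k
    by (simp add: bump_in_Cc_infty)
  have "(\<lambda>k. L2_sqdist (indicator {a..b}) (bump a b (real (Suc k)))) \<longlonglongrightarrow> (\<integral>\<^sup>+(x::real). 0 \<partial>lborel)"
    unfolding L2_sqdist_def
  proof (rule nn_integral_dominated_convergence[where w = "indicator {a..b} :: real \<Rightarrow> ennreal"])
    show "AE x in lborel. ennreal ((indicator {a..b} x - bump a b (real (Suc k)) x)\<^sup>2) \<le> indicator {a..b} x" for k
      using bump_indicator_square_le[of "real (Suc k)" a b]
      by (intro AE_I2) (simp add: ennreal_leI flip: ennreal_indicator)
    show "AE x in lborel. (\<lambda>k. ennreal ((indicator {a..b} x - bump a b (real (Suc k)) x)\<^sup>2)) \<longlonglongrightarrow> 0"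
      using AE_lborel_singleton[of a] AE_lborel_singleton[of b]
    proof eventually_elim
      case (elim x)
      have "(\<lambda>k. bump a b (real (Suc k)) x) \<longlonglongrightarrow> indicator {a..b} x"
        using filterlim_compose[OF tendsto_bump_at_top[OF elim] filterlim_real_sequentially]
        by (rule LIMSEQ_Suc)
      then have "(\<lambda>k. ennreal ((indicator {a..b} x - bump a b (real (Suc k)) x)\<^sup>2))
                   \<longlonglongrightarrow> ennreal ((indicator {a..b} x - indicator {a..b} x)\<^sup>2)"
        by (intro tendsto_intros)
      then show ?case by simp
    qed
    show "integral\<^sup>N lborel (indicator {a..b}) < \<infinity>"
      using emeasure_lborel_cbox_finite[of a b] by simp
  qed measurable
  then show "(\<lambda>k. L2_sqdist (indicator {a..b}) (bump a b (real (Suc k)))) \<longlonglongrightarrow> 0"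
    by simp
qed simp_all

lemma L2_approx_by_Cc_indicator_disjoint_UN:
  fixes F :: "nat \<Rightarrow> real set"
  assumes "disjoint_family F" and [measurable]: "\<And>i. F i \<in> sets borel"
    and approx: "\<And>i. L2_approx_by_Cc (indicator (F i))" and "emeasure lborel (\<Union>i. F i) < \<infinity>"
  shows "L2_approx_by_Cc (indicator (\<Union>i. F i))"
proof (rule L2_approx_by_Cc_limit)
  show "L2_approx_by_Cc (indicator (\<Union>i<k. F i))" for k
  proof -
    have "disjoint_family_on F {..<k}"
      using assms(1) by (rule disjoint_family_on_mono[rotated]) simp
    then have "indicator (\<Union>i<k. F i) = (\<lambda>x. \<Sum>i<k. indicator (F i) x :: real)"
      by (intro ext) (simp only: indicator_UN_disjoint[OF finite_lessThan])
    then show ?thesis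
      using approx by (simp add: L2_approx_by_Cc_sum)
  qed
  show "(\<lambda>k. L2_sqdist (indicator (\<Union>i. F i)) (indicator (\<Union>i<k. F i))) \<longlonglongrightarrow> 0"
  proof (rule tendsto_L2_sqdist_indicator_incseq)
    show "incseq (\<lambda>k. \<Union>i<k. F i)"
      by (intro monoI UN_mono order.refl) auto
    show "(\<Union>k. \<Union>i<k. F i) = (\<Union>i. F i)"
      by blast
  qed (use assms(4) in measurable)
qed measurable

text \<open>Localising to \<open>[-r, r]\<close> keeps every set of the induction of finite measure.\<close>
lemma L2_approx_by_Cc_indicator_bounded:
  assumes "A \<in> sets borel"
  shows "L2_approx_by_Cc (indicator (A \<inter> {-r..r}))"
  using assms
proof (induction rule: borel_set_induct)
  case empty
  then show ?case by (simp add: L2_approx_by_Cc_if_Cc zero_in_Cc_infty)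
next
  case (interval a b)
  have "{a..b} \<inter> {-r..r} = {max a (-r)..min b r}" by auto
  then show ?case by (simp add: L2_approx_by_Cc_indicator_Icc)
next
  case (compl A)
  have "indicator (- A \<inter> {-r..r}) = (\<lambda>x. indicator {-r..r} x - indicator (A \<inter> {-r..r}) x :: real)"
    by (auto simp: fun_eq_iff indicator_def)
  with compl.IH show ?case by (simp add: L2_approx_by_Cc_diff L2_approx_by_Cc_indicator_Icc)
next
  case (union F)
  have [measurable]: "\<And>i. F i \<in> sets borel" by fact
  have eq: "(\<Union>i. F i) \<inter> {-r..r} = (\<Union>i. F i \<inter> {-r..r})" by auto
  show ?case unfolding eq
  proof (rule L2_approx_by_Cc_indicator_disjoint_UN)
    show "disjoint_family (\<lambda>i. F i \<inter> {-r..r})"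
      using union.hyps(1) by (auto simp: disjoint_family_on_def)
    have "emeasure lborel (\<Union>i. F i \<inter> {-r..r}) \<le> emeasure lborel {-r..r}"
      by (intro emeasure_mono) auto
    moreover have "emeasure lborel {-r..r} < \<infinity>"
      using emeasure_lborel_cbox_finite[of "-r" r] by simp
    ultimately show "emeasure lborel (\<Union>i. F i \<inter> {-r..r}) < \<infinity>"
      by (rule le_less_trans)
  qed (measurable, rule union.IH)
qed

lemma L2_approx_by_Cc_indicator:
  assumes [measurable]: "A \<in> sets borel" and "emeasure lborel A < \<infinity>"
  shows "L2_approx_by_Cc (indicator A)"
proof (rule L2_approx_by_Cc_limit)
  show "(\<lambda>k. L2_sqdist (indicator A) (indicator (A \<inter> {- real k..real k}))) \<longlonglongrightarrow> 0"
  proof (rule tendsto_L2_sqdist_indicator_incseq)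
    show "incseq (\<lambda>k. A \<inter> {- real k..real k})"
      by (intro monoI Int_mono order.refl) auto
    show "(\<Union>k. A \<inter> {- real k..real k}) = A"
    proof (intro equalityI subsetI)
      fix x assume "x \<in> A"
      obtain k where "\<bar>x\<bar> \<le> real k" using real_arch_simple by blast
      with \<open>x \<in> A\<close> show "x \<in> (\<Union>k. A \<inter> {- real k..real k})"
        by (auto simp: abs_le_iff intro!: exI[of _ k])
    qed auto
  qed (use assms in measurable)
qed (use assms(1) L2_approx_by_Cc_indicator_bounded in measurable)

lemma L2_approx_by_Cc_simple_function:
  assumes "simple_function lborel s" and fin: "\<And>v. v \<noteq> 0 \<Longrightarrow> emeasure lborel (s -` {v}) < \<infinity>"
  shows "L2_approx_by_Cc s"
proof -
  have "finite (range s)"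
    using simple_functionD(1)[OF assms(1)] by simp
  have level_set [measurable]: "s -` {v} \<in> sets borel" for v
    using simple_functionD(2)[OF assms(1), of "{v}"] by simp
  have "L2_approx_by_Cc (\<lambda>x. \<Sum>v\<in>range s. v * indicator (s -` {v}) x)"
  proof (rule L2_approx_by_Cc_sum[OF \<open>finite (range s)\<close>])
    show "L2_approx_by_Cc (\<lambda>x. v * indicator (s -` {v}) x)" for v
    proof (cases "v = 0")
      case True
      then show ?thesis by (simp add: L2_approx_by_Cc_if_Cc zero_in_Cc_infty)
    next
      case False
      then show ?thesis by (intro L2_approx_by_Cc_cmult L2_approx_by_Cc_indicator level_set fin)
    qed
  qed
  also have "(\<lambda>x. \<Sum>v\<in>range s. v * indicator (s -` {v}) x) = s"
  proof
    fix x
    have "(\<Sum>v\<in>range s. v * indicator (s -` {v}) x) = (\<Sum>v\<in>range s. if v = s x then v else 0)"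
      by (intro sum.cong) (auto simp: indicator_def)
    also have "\<dots> = s x"
      using \<open>finite (range s)\<close> by simp
    finally show "(\<Sum>v\<in>range s. v * indicator (s -` {v}) x) = s x" .
  qed
  finally show ?thesis .
qed

lemma emeasure_level_set_le:
  fixes s h :: "real \<Rightarrow> real"
  assumes "s -` {v} \<in> sets borel" "h \<in> borel_measurable borel"
    and "v \<noteq> 0" "\<And>x. \<bar>s x\<bar> \<le> 2 * \<bar>h x\<bar>"
  shows "emeasure lborel (s -` {v}) \<le> ennreal (4 / v\<^sup>2) * (\<integral>\<^sup>+x. ennreal ((h x)\<^sup>2) \<partial>lborel)"
proof -
  have "indicator (s -` {v}) x \<le> ennreal (4 / v\<^sup>2) * ennreal ((h x)\<^sup>2)" for x
  proof (cases "s x = v")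
    case True
    have "\<bar>v\<bar>\<^sup>2 \<le> (2 * \<bar>h x\<bar>)\<^sup>2"
      using assms(4)[of x] True by (intro power_mono) simp_all
    then have "1 \<le> 4 / v\<^sup>2 * (h x)\<^sup>2"
      using \<open>v \<noteq> 0\<close> by (simp add: field_simps power_mult_distrib)
    with True show ?thesis
      by (simp add: ennreal_mult[symmetric] ennreal_leI del: ennreal_1)
  qed simp
  then have "(\<integral>\<^sup>+x. indicator (s -` {v}) x \<partial>lborel) \<le> (\<integral>\<^sup>+x. ennreal (4 / v\<^sup>2) * ennreal ((h x)\<^sup>2) \<partial>lborel)"
    by (intro nn_integral_mono)
  with assms(1,2) show ?thesis
    by (simp add: nn_integral_cmult)
qed

lemma tendsto_L2_sqdist_dominated:
  assumes [measurable]: "h \<in> borel_measurable borel" "\<And>i. s i \<in> borel_measurable borel"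
    and H: "(\<integral>\<^sup>+x. ennreal ((h x)\<^sup>2) \<partial>lborel) < \<infinity>"
    and lim: "\<And>x. (\<lambda>i. s i x) \<longlonglongrightarrow> h x" and bound: "\<And>i x. \<bar>s i x\<bar> \<le> 2 * \<bar>h x\<bar>"
  shows "(\<lambda>i. L2_sqdist h (s i)) \<longlonglongrightarrow> 0"
proof -
  have "(\<lambda>i. L2_sqdist h (s i)) \<longlonglongrightarrow> (\<integral>\<^sup>+(x::real). 0 \<partial>lborel)"
    unfolding L2_sqdist_def
  proof (rule nn_integral_dominated_convergence[where w = "\<lambda>x. 9 * ennreal ((h x)\<^sup>2)"])
    show "AE x in lborel. ennreal ((h x - s i x)\<^sup>2) \<le> 9 * ennreal ((h x)\<^sup>2)" for i
    proof (rule AE_I2)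
      fix x
      have "\<bar>h x - s i x\<bar> \<le> 3 * \<bar>h x\<bar>"
        using bound[of i x] by linarith
      then have "\<bar>h x - s i x\<bar>\<^sup>2 \<le> (3 * \<bar>h x\<bar>)\<^sup>2"
        by (rule power_mono) simp
      then have "ennreal ((h x - s i x)\<^sup>2) \<le> ennreal (9 * (h x)\<^sup>2)"
        by (intro ennreal_leI) (simp add: power_mult_distrib)
      then show "ennreal ((h x - s i x)\<^sup>2) \<le> 9 * ennreal ((h x)\<^sup>2)"
        by (simp add: ennreal_mult)
    qed
    show "(\<integral>\<^sup>+x. 9 * ennreal ((h x)\<^sup>2) \<partial>lborel) < \<infinity>"
      using H by (simp add: nn_integral_cmult ennreal_mult_less_top)
    show "AE x in lborel. (\<lambda>i. ennreal ((h x - s i x)\<^sup>2)) \<longlonglongrightarrow> 0"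
    proof (rule AE_I2)
      fix x
      have "(\<lambda>i. ennreal ((h x - s i x)\<^sup>2)) \<longlonglongrightarrow> ennreal ((h x - h x)\<^sup>2)"
        by (intro tendsto_intros lim)
      then show "(\<lambda>i. ennreal ((h x - s i x)\<^sup>2)) \<longlonglongrightarrow> 0"
        by simp
    qed
  qed measurable
  then show ?thesis
    by simp
qed

lemma L2_approx_by_Cc_if_square_integrable:
  assumes [measurable]: "h \<in> borel_measurable borel" and "integrable lborel (\<lambda>x. (h x)\<^sup>2)"
  shows "L2_approx_by_Cc h"
proof -
  have H: "(\<integral>\<^sup>+x. ennreal ((h x)\<^sup>2) \<partial>lborel) < \<infinity>"
    using assms(2) by (simp add: integrable_iff_bounded)
  obtain s where s: "\<And>i. simple_function lborel (s i)" "\<And>x. (\<lambda>i. s i x) \<longlonglongrightarrow> h x"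
      "\<And>i x. \<bar>s i x\<bar> \<le> 2 * \<bar>h x\<bar>"
    using borel_measurable_implies_sequence_metric[of h lborel 0] by (auto simp: dist_real_def)
  have [measurable]: "s i \<in> borel_measurable borel" for i
    using borel_measurable_simple_function[OF s(1)] by simp
  show ?thesis
  proof (rule L2_approx_by_Cc_limit)
    show "L2_approx_by_Cc (s i)" for i
    proof (rule L2_approx_by_Cc_simple_function[OF s(1)])
      fix v :: real assume "v \<noteq> 0"
      have "s i -` {v} \<in> sets borel"
        using simple_functionD(2)[OF s(1)[of i], of "{v}"] by simp
      with \<open>v \<noteq> 0\<close> s(3)
      have "emeasure lborel (s i -` {v}) \<le> ennreal (4 / v\<^sup>2) * (\<integral>\<^sup>+x. ennreal ((h x)\<^sup>2) \<partial>lborel)"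
        by (intro emeasure_level_set_le) simp_all
      also have "\<dots> < \<infinity>"
        using H by (simp add: ennreal_mult_less_top)
      finally show "emeasure lborel (s i -` {v}) < \<infinity>" .
    qed
    show "(\<lambda>i. L2_sqdist h (s i)) \<longlonglongrightarrow> 0"
      by (rule tendsto_L2_sqdist_dominated[OF _ _ H s(2,3)]) measurable
  qed measurable
qed

lemma C_sbm_dense:
  assumes [measurable]: "h \<in> borel_measurable borel" and "integrable lborel (\<lambda>x. (h x)\<^sup>2)"
    and "\<epsilon> > 0"
  shows "\<exists>c\<in>C_sbm. normsq_sbm \<gamma> (\<lambda>x. h x - c x) < \<epsilon>"
proof -
  obtain g where g: "\<And>k. g k \<in> Cc_infty" "(\<lambda>k. L2_sqdist h (g k)) \<longlonglongrightarrow> 0"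
    using L2_approx_by_Cc_if_square_integrable[OF assms(1,2)]
    unfolding L2_approx_by_Cc_def by blast
  have "\<forall>\<^sub>F k in sequentially. L2_sqdist h (g k) < ennreal \<epsilon>"
    using order_tendstoD(2)[OF g(2), of "ennreal \<epsilon>"] \<open>\<epsilon> > 0\<close> by simp
  then obtain k where k: "L2_sqdist h (g k) < ennreal \<epsilon>"
    using eventually_happens'[OF sequentially_bot] by blast
  have [measurable]: "g k \<in> borel_measurable borel"
    using g(1) by (rule Cc_infty_borel_measurable)
  define c where "c x = g k x + (if x = 0 then h 0 - g k 0 else 0)" for x
  have "c \<in> C_sbm"
    unfolding C_sbm_def c_def using g(1) by blast
  have "normsq_sbm \<gamma> (\<lambda>x. h x - c x) = (\<integral>x. (h x - c x)\<^sup>2 \<partial>lborel)"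
    by (simp add: normsq_sbm_def c_def)
  also have "\<dots> = (\<integral>x. (h x - g k x)\<^sup>2 \<partial>lborel)"
  proof (rule integral_cong_AE)
    show "AE x in lborel. (h x - c x)\<^sup>2 = (h x - g k x)\<^sup>2"
      using AE_lborel_singleton[of 0] by eventually_elim (simp add: c_def)
  qed (simp_all add: c_def)
  also have "\<dots> = enn2real (L2_sqdist h (g k))"
    unfolding L2_sqdist_def by (rule integral_eq_nn_integral) auto
  also have "\<dots> < \<epsilon>"
    using k less_trans[OF k ennreal_less_top] by simp
  finally show ?thesis
    using \<open>c \<in> C_sbm\<close> by blast
qed

section \<open>Riemann sums over the lattice \<open>(1/t)\<int>\<close>\<close>

lemma tendsto_floor_mult_div_at_top: "((\<lambda>t. real_of_int \<lfloor>t * x\<rfloor> / t) \<longlongrightarrow> x) at_top"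
proof (rule tendsto_sandwich[where f = "\<lambda>t. x - 1 / t" and h = "\<lambda>t. x"])
  show "\<forall>\<^sub>F t in at_top. x - 1 / t \<le> real_of_int \<lfloor>t * x\<rfloor> / t"
    using eventually_gt_at_top[of 0]
  proof eventually_elim
    case (elim t)
    have "x - 1 / t = (t * x - 1) / t"
      using elim by (simp add: field_simps)
    also have "\<dots> \<le> real_of_int \<lfloor>t * x\<rfloor> / t"
      using elim real_of_int_floor_gt_diff_one[of "t * x"] by (intro divide_right_mono) simp_all
    finally show ?case .
  qed
  show "\<forall>\<^sub>F t in at_top. real_of_int \<lfloor>t * x\<rfloor> / t \<le> x"
    using eventually_gt_at_top[of 0]
    by eventually_elim (simp add: divide_le_eq mult.commute)
  show "((\<lambda>t. x - 1 / t) \<longlongrightarrow> x) at_top"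
    using tendsto_diff[OF tendsto_const tendsto_inverse_0_at_top[OF filterlim_ident], of x]
    by (simp add: inverse_eq_divide)
qed simp

lemma lattice_step_eq_sum:
  fixes \<psi> :: "real \<Rightarrow> real"
  assumes "t > 0" "finite K" and "\<And>k. k \<notin> K \<Longrightarrow> \<psi> (of_int k / t) = 0"
  shows "\<psi> (of_int \<lfloor>t * x\<rfloor> / t) = (\<Sum>k\<in>K. \<psi> (of_int k / t) * indicator {of_int k / t..<(of_int k + 1) / t} x)"
proof -
  have "indicator {of_int k / t..<(of_int k + 1) / t} x = (if k = \<lfloor>t * x\<rfloor> then 1 else 0 :: real)" for k
  proof -
    have "x \<in> {of_int k / t..<(of_int k + 1) / t} \<longleftrightarrow> of_int k \<le> t * x \<and> t * x < of_int k + 1"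
      using assms(1) by (auto simp: field_simps)
    also have "\<dots> \<longleftrightarrow> \<lfloor>t * x\<rfloor> = k"
      by (simp add: floor_eq_iff)
    finally show ?thesis by auto
  qed
  then have "(\<Sum>k\<in>K. \<psi> (of_int k / t) * indicator {of_int k / t..<(of_int k + 1) / t} x)
               = (\<Sum>k\<in>K. if k = \<lfloor>t * x\<rfloor> then \<psi> (of_int k / t) else 0)"
    by (intro sum.cong) auto
  also have "\<dots> = \<psi> (of_int \<lfloor>t * x\<rfloor> / t)"
    using assms(2) assms(3)[of "\<lfloor>t * x\<rfloor>"] by (auto simp: sum.delta')
  finally show ?thesis ..
qed

lemma integral_lattice_step:
  fixes \<psi> :: "real \<Rightarrow> real"
  assumes "t > 0" "finite K" and "\<And>k. k \<notin> K \<Longrightarrow> \<psi> (of_int k / t) = 0"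
  shows "(\<integral>x. \<psi> (of_int \<lfloor>t * x\<rfloor> / t) \<partial>lborel) = (\<Sum>k\<in>K. \<psi> (of_int k / t) / t)"
proof -
  have le: "of_int k / t \<le> (of_int k + 1) / t" for k
    using \<open>t > 0\<close> by (simp add: divide_right_mono)
  have "(\<integral>x. \<psi> (of_int \<lfloor>t * x\<rfloor> / t) \<partial>lborel)
          = (\<integral>x. (\<Sum>k\<in>K. \<psi> (of_int k / t) * indicator {of_int k / t..<(of_int k + 1) / t} x) \<partial>lborel)"
    using lattice_step_eq_sum[where K = K and \<psi> = \<psi>, OF assms(1,2) assms(3)] by simp
  also have "\<dots> = (\<Sum>k\<in>K. \<integral>x. \<psi> (of_int k / t) * indicator {of_int k / t..<(of_int k + 1) / t} x \<partial>lborel)"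
    using le by (intro Bochner_Integration.integral_sum integrable_mult_right integrable_real_indicator) auto
  also have "\<dots> = (\<Sum>k\<in>K. \<psi> (of_int k / t) * measure lborel {of_int k / t..<(of_int k + 1) / t})"
    by simp
  also have "\<dots> = (\<Sum>k\<in>K. \<psi> (of_int k / t) / t)"
    using le \<open>t > 0\<close> by (intro sum.cong) (simp_all add: field_simps)
  finally show ?thesis .
qed

lemma tendsto_integral_lattice_step_at_top:
  fixes \<psi> :: "real \<Rightarrow> real"
  assumes [measurable]: "\<psi> \<in> borel_measurable borel"
    and supp: "\<And>y. R < \<bar>y\<bar> \<Longrightarrow> \<psi> y = 0" and bnd: "\<And>y. \<bar>\<psi> y\<bar> \<le> B"
    and cont: "AE x in lborel. isCont \<psi> x"
  shows "((\<lambda>t. \<integral>x. \<psi> (of_int \<lfloor>t * x\<rfloor> / t) \<partial>lborel) \<longlongrightarrow> (\<integral>x. \<psi> x \<partial>lborel)) at_top"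
proof (rule integral_dominated_convergence_at_top[where w = "\<lambda>x. B * indicator {-R-1..R+1} x"])
  show "integrable lborel (\<lambda>x. B * indicator {-R-1..R+1} x)"
    using emeasure_lborel_cbox_finite[of "-R-1" "R+1"]
    by (intro integrable_mult_right integrable_real_indicator) auto
  show "AE x in lborel. ((\<lambda>t. \<psi> (of_int \<lfloor>t * x\<rfloor> / t)) \<longlongrightarrow> \<psi> x) at_top"
    using cont by eventually_elim (rule isCont_tendsto_compose[OF _ tendsto_floor_mult_div_at_top])
  show "\<forall>\<^sub>F t in at_top. AE x in lborel. norm (\<psi> (of_int \<lfloor>t * x\<rfloor> / t)) \<le> B * indicator {-R-1..R+1} x"
    using eventually_ge_at_top[of 1]
  proof eventually_elim
    case (elim t)
    show ?case
    proof (rule AE_I2)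
      fix x
      define y where "y = of_int \<lfloor>t * x\<rfloor> / t"
      show "norm (\<psi> y) \<le> B * indicator {-R-1..R+1} x"
      proof (cases "R < \<bar>y\<bar>")
        case True
        with supp bnd[of 0] show ?thesis by simp
      next
        case False
        have "y \<le> x" "x < y + 1 / t"
          using elim real_of_int_floor_add_one_gt[of "t * x"] by (simp_all add: y_def field_simps)
        moreover have "1 / t \<le> 1"
          using elim by simp
        ultimately have "x \<in> {-R-1..R+1}"
          using False by auto
        with bnd[of y] show ?thesis by simp
      qed
    qed
  qed
qed measurable

lemma tendsto_lattice_sum_at_top:
  fixes \<psi> :: "real \<Rightarrow> real"
  assumes "\<psi> \<in> borel_measurable borel"
    and supp: "\<And>y. R < \<bar>y\<bar> \<Longrightarrow> \<psi> y = 0" and "\<And>y. \<bar>\<psi> y\<bar> \<le> B"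
    and "AE x in lborel. isCont \<psi> x"
  shows "((\<lambda>t. \<Sum>\<^sub>\<infinity>k::int. \<psi> (of_int k / t) / t) \<longlongrightarrow> (\<integral>x. \<psi> x \<partial>lborel)) at_top"
proof (rule Lim_transform_eventually[OF tendsto_integral_lattice_step_at_top[OF assms]])
  show "\<forall>\<^sub>F t in at_top. (\<integral>x. \<psi> (of_int \<lfloor>t * x\<rfloor> / t) \<partial>lborel) = (\<Sum>\<^sub>\<infinity>k::int. \<psi> (of_int k / t) / t)"
    using eventually_gt_at_top[of 0]
  proof eventually_elim
    case (elim t)
    define K where "K = {- \<lceil>R * t\<rceil>..\<lceil>R * t\<rceil>}"
    have outside: "\<psi> (of_int k / t) = 0" if "k \<notin> K" for k
    proof (rule supp)
      have "\<lceil>R * t\<rceil> < \<bar>k\<bar>"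
        using that unfolding K_def by auto
      then have "R * t < \<bar>of_int k\<bar>"
        using le_of_int_ceiling[of "R * t"] by (metis of_int_abs of_int_less_iff order_le_less_trans)
      with elim show "R < \<bar>of_int k / t\<bar>"
        by (simp add: field_simps)
    qed
    have "(\<Sum>\<^sub>\<infinity>k::int. \<psi> (of_int k / t) / t) = (\<Sum>\<^sub>\<infinity>k\<in>K. \<psi> (of_int k / t) / t)"
      using outside by (intro infsum_cong_neutral) auto
    also have "\<dots> = (\<Sum>k\<in>K. \<psi> (of_int k / t) / t)"
      by (simp add: K_def)
    also have "\<dots> = (\<integral>x. \<psi> (of_int \<lfloor>t * x\<rfloor> / t) \<partial>lborel)"
      using elim outside by (intro integral_lattice_step[symmetric]) (simp_all add: K_def)
    finally show ?case ..
  qed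
qed

section \<open>Convergence of the norms on \<open>C\<close>\<close>

lemma C_sbm_borel_measurable: "f \<in> C_sbm \<Longrightarrow> f \<in> borel_measurable borel"
  unfolding C_sbm_def by (auto dest: Cc_infty_borel_measurable)

lemma C_sbm_bounded_support:
  assumes "f \<in> C_sbm"
  obtains R where "\<And>y. R < \<bar>y\<bar> \<Longrightarrow> f y = 0"
proof -
  obtain g c where g: "g \<in> Cc_infty" and f: "f = (\<lambda>x. g x + (if x = 0 then c else 0))"
    using assms unfolding C_sbm_def by blast
  obtain R where "\<And>y. R < \<bar>y\<bar> \<Longrightarrow> g y = 0"
    using Cc_infty_bounded_support[OF g] by blast
  then have "f y = 0" if "max R 0 < \<bar>y\<bar>" for y
    using that by (auto simp: f)
  then show ?thesis using that by blast
qed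

lemma C_sbm_bounded:
  assumes "f \<in> C_sbm"
  obtains B where "\<And>y. \<bar>f y\<bar> \<le> B"
proof -
  obtain g c where g: "g \<in> Cc_infty" and f: "f = (\<lambda>x. g x + (if x = 0 then c else 0))"
    using assms unfolding C_sbm_def by blast
  obtain B where B: "\<And>y. \<bar>g y\<bar> \<le> B"
    using Cc_infty_bounded[OF g] by blast
  have "\<bar>f y\<bar> \<le> B + \<bar>c\<bar>" for y
    using abs_triangle_ineq[of "g y" c] B[of y] by (auto simp: f)
  then show ?thesis using that by blast
qed

lemma C_sbm_isCont: "f \<in> C_sbm \<Longrightarrow> x \<noteq> 0 \<Longrightarrow> isCont f x"
proof -
  assume "f \<in> C_sbm" "x \<noteq> 0"
  then obtain g c where g: "g \<in> Cc_infty" and f: "f = (\<lambda>x. g x + (if x = 0 then c else 0))"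
    unfolding C_sbm_def by blast
  have "\<forall>\<^sub>F y in nhds x. f y = g y"
    using t1_space_nhds[OF \<open>x \<noteq> 0\<close>] by eventually_elim (simp add: f)
  moreover have "isCont g x"
    using Cc_infty_continuous[OF g] by (simp add: continuous_on_eq_continuous_at)
  ultimately show "isCont f x"
    by (simp add: isCont_cong)
qed

lemma tendsto_normsq_sip:
  assumes "f \<in> C_sbm"
  shows "(\<lambda>N. normsq_sip \<gamma> N f) \<longlonglongrightarrow> normsq_sbm \<gamma> f"
proof -
  obtain R where R: "\<And>y. R < \<bar>y\<bar> \<Longrightarrow> f y = 0"
    using C_sbm_bounded_support[OF assms] by blast
  obtain B where B: "\<And>y. \<bar>f y\<bar> \<le> B"
    using C_sbm_bounded[OF assms] by blast
  have "((\<lambda>t. \<Sum>\<^sub>\<infinity>k::int. (f (of_int k / t))\<^sup>2 / t) \<longlongrightarrow> (\<integral>x. (f x)\<^sup>2 \<partial>lborel)) at_top"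
  proof (rule tendsto_lattice_sum_at_top)
    show "(\<lambda>x. (f x)\<^sup>2) \<in> borel_measurable borel"
      using C_sbm_borel_measurable[OF assms] by measurable
    show "(f y)\<^sup>2 = 0" if "R < \<bar>y\<bar>" for y
      using R[OF that] by simp
    show "\<bar>(f y)\<^sup>2\<bar> \<le> B\<^sup>2" for y
      using power_mono[OF B[of y], of 2] by simp
    show "AE x in lborel. isCont (\<lambda>x. (f x)\<^sup>2) x"
      using AE_lborel_singleton[of 0]
      by eventually_elim (intro continuous_intros C_sbm_isCont[OF assms])
  qed
  then have "(\<lambda>N. \<Sum>\<^sub>\<infinity>k::int. (f (of_int k / real N))\<^sup>2 / real N) \<longlonglongrightarrow> (\<integral>x. (f x)\<^sup>2 \<partial>lborel)"
    by (rule filterlim_compose[OF _ filterlim_real_sequentially])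
  then show ?thesis
    unfolding normsq_sip_def normsq_sbm_def by (intro tendsto_add tendsto_const) simp
qed

theorem proposition5p5:
  fixes \<gamma> :: real
  assumes "\<gamma> > 0"
  shows "(\<forall>h. h \<in> borel_measurable borel \<longrightarrow> integrable lborel (\<lambda>x. (h x)^2) \<longrightarrow>
            (\<forall>\<epsilon>>0. \<exists>c\<in>C_sbm. normsq_sbm \<gamma> (\<lambda>x. h x - c x) < \<epsilon>))
       \<and> (\<forall>f\<in>C_sbm. (\<lambda>N. sqrt (normsq_sip \<gamma> N f)) \<longlonglongrightarrow> sqrt (normsq_sbm \<gamma> f))"
  using C_sbm_dense tendsto_normsq_sip tendsto_real_sqrt by blast

end
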